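(* Let $T,S\in\mathcal{B}_A(\mathcal{H})$. Then $$\omega_A(T+S)\le\sqrt{\omega_A^2(T)+\omega_A^2(S)+\tfrac12\big\|T^{\sharp_A}T+SS^{\sharp_A}\big\|_A+\omega_A(ST)}.$$
   Context: $\mathcal{H}$ is a complex Hilbert space with inner product $\langle\cdot,\cdot\rangle$, and $A$ is a fixed nonzero positive bounded operator on $\mathcal{H}$. Set $\langle x,y\rangle_A=\langle Ax,y\rangle$ and $\|x\|_A=\|A^{1/2}x\|$. $\mathcal{B}_A(\mathcal{H})$ is the set of bounded operators $T$ for which there exists a bounded $S$ with $\langle Tx,y\rangle_A=\langle x,Sy\rangle_A$ for all $x,y$ (equivalently $\mathcal{R}(T^*A)\subseteq\mathcal{R}(A)$). For $T\in\mathcal{B}_A(\mathcal{H})$, $T^{\sharp_A}=A^\dagger T^*A$ ($A^\dagger$ the Moore–Penrose inverse) is the reduced solution of $AX=T^*A$. For an operator $T$ with $\|Tx\|_A\le\lambda\|x\|_A$ for some $\lambda>0$ and all $x$, $\|T\|_A=\sup\{\|Tx\|_A: \|x\|_A=1\}$, and $\omega_A(T)=\sup\{|\langle Tx,x\rangle_A|:\|x\|_A=1\}$. *)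

theory Defs
  imports "HOL-Analysis.Analysis"
begin

class complex_vector = real_vector +
  fixes scaleC :: "complex \<Rightarrow> 'a \<Rightarrow> 'a" (infixr "*\<^sub>C" 75)
  assumes scaleC_add_right: "a *\<^sub>C (x + y) = a *\<^sub>C x + a *\<^sub>C y"
    and scaleC_add_left: "(a + b) *\<^sub>C x = a *\<^sub>C x + b *\<^sub>C x"
    and scaleC_scaleC: "a *\<^sub>C (b *\<^sub>C x) = (a * b) *\<^sub>C x"
    and scaleC_one: "1 *\<^sub>C x = x"
    and scaleR_scaleC: "scaleR r x = complex_of_real r *\<^sub>C x"

class complex_inner = complex_vector + real_normed_vector +
  fixes cinner :: "'a \<Rightarrow> 'a \<Rightarrow> complex"
  assumes cinner_commute: "cinner x y = cnj (cinner y x)"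
    and cinner_add_left: "cinner (x + y) z = cinner x z + cinner y z"
    and cinner_scaleC_left: "cinner (a *\<^sub>C x) y = a * cinner x y"
    and cinner_self_nonneg: "Im (cinner x x) = 0 \<and> 0 \<le> Re (cinner x x)"
    and cinner_self_eq_zero: "cinner x x = 0 \<longleftrightarrow> x = 0"
    and norm_eq_sqrt_cinner: "norm x = sqrt (Re (cinner x x))"

class chilbert_space = complex_inner + complete_space

definition bounded_clinear :: "('a::complex_inner \<Rightarrow> 'a) \<Rightarrow> bool" where
  "bounded_clinear T \<longleftrightarrow>
     (\<forall>x y. T (x + y) = T x + T y) \<and> (\<forall>c x. T (c *\<^sub>C x) = c *\<^sub>C T x) \<and>
     (\<exists>K. \<forall>x. norm (T x) \<le> norm x * K)"

definition adj :: "('a::complex_inner \<Rightarrow> 'a) \<Rightarrow> ('a \<Rightarrow> 'a)" where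
  "adj T = (THE S. bounded_clinear S \<and> (\<forall>x y. cinner (T x) y = cinner x (S y)))"

definition positive_op :: "('a::complex_inner \<Rightarrow> 'a) \<Rightarrow> bool" where
  "positive_op A \<longleftrightarrow> bounded_clinear A \<and>
     (\<forall>x. Im (cinner (A x) x) = 0 \<and> 0 \<le> Re (cinner (A x) x))"

text \<open>Moore--Penrose inverse of \<open>A\<close>, evaluated on the range of \<open>A\<close>:
  \<open>A\<^sup>\<dagger> y\<close> is the unique \<open>z \<in> N(A)\<^sup>\<bottom>\<close> with \<open>A z = y\<close>.  (This is the full
  definition of \<open>A\<^sup>\<dagger>\<close> on \<open>R(A)\<close>, the only place it is used below.)\<close>
definition mp_inv :: "('a::complex_inner \<Rightarrow> 'a) \<Rightarrow> 'a \<Rightarrow> 'a" where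
  "mp_inv A y = (THE z. (\<forall>w. A w = 0 \<longrightarrow> cinner z w = 0) \<and> A z = y)"

definition A_inner :: "('a::complex_inner \<Rightarrow> 'a) \<Rightarrow> 'a \<Rightarrow> 'a \<Rightarrow> complex" where
  "A_inner A x y = cinner (A x) y"

text \<open>\<open>\<parallel>x\<parallel>\<^sub>A = \<parallel>A\<^sup>1\<^sup>/\<^sup>2 x\<parallel> = sqrt \<langle>Ax,x\<rangle>\<close>.\<close>
definition A_seminorm :: "('a::complex_inner \<Rightarrow> 'a) \<Rightarrow> 'a \<Rightarrow> real" where
  "A_seminorm A x = sqrt (Re (A_inner A x x))"

definition B_A :: "('a::complex_inner \<Rightarrow> 'a) \<Rightarrow> ('a \<Rightarrow> 'a) set" where
  "B_A A = {T. bounded_clinear T \<and>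
     (\<exists>S. bounded_clinear S \<and> (\<forall>x y. A_inner A (T x) y = A_inner A x (S y)))}"

definition A_sharp :: "('a::complex_inner \<Rightarrow> 'a) \<Rightarrow> ('a \<Rightarrow> 'a) \<Rightarrow> 'a \<Rightarrow> 'a" where
  "A_sharp A T = (\<lambda>x. mp_inv A (adj T (A x)))"

definition A_opnorm :: "('a::complex_inner \<Rightarrow> 'a) \<Rightarrow> ('a \<Rightarrow> 'a) \<Rightarrow> real" where
  "A_opnorm A T = Sup {A_seminorm A (T x) | x. A_seminorm A x = 1}"

definition A_numrad :: "('a::complex_inner \<Rightarrow> 'a) \<Rightarrow> ('a \<Rightarrow> 'a) \<Rightarrow> real" where
  "A_numrad A T = Sup {cmod (A_inner A (T x) x) | x. A_seminorm A x = 1}"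

end

theory Submission
  imports Defs
begin

text \<open>For an \<open>A\<close>-unit vector \<open>x\<close> put \<open>t = \<langle>T x, x\<rangle>\<^sub>A\<close> and
  \<open>s = \<langle>S x, x\<rangle>\<^sub>A = \<langle>x, S\<^sup>\<sharp> x\<rangle>\<^sub>A\<close>, so that
  \<open>|\<langle>(T + S) x, x\<rangle>\<^sub>A|\<^sup>2 \<le> |t|\<^sup>2 + |s|\<^sup>2 + 2 |t| |s|\<close>.  Buzano's inequality for the
  semi-inner product \<open>\<langle>\<cdot>,\<cdot>\<rangle>\<^sub>A\<close> gives
  \<open>2 |t| |s| \<le> \<parallel>T x\<parallel>\<^sub>A \<parallel>S\<^sup>\<sharp> x\<parallel>\<^sub>A + |\<langle>T x, S\<^sup>\<sharp> x\<rangle>\<^sub>A|\<close>; here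
  \<open>\<langle>T x, S\<^sup>\<sharp> x\<rangle>\<^sub>A = \<langle>S T x, x\<rangle>\<^sub>A\<close>, and by AM-GM the product is at most half of
  \<open>\<parallel>T x\<parallel>\<^sub>A\<^sup>2 + \<parallel>S\<^sup>\<sharp> x\<parallel>\<^sub>A\<^sup>2 = Re \<langle>x, (T\<^sup>\<sharp> T + S S\<^sup>\<sharp>) x\<rangle>\<^sub>A\<close>.

  The groundwork is the identity \<open>\<langle>T x, y\<rangle>\<^sub>A = \<langle>x, T\<^sup>\<sharp> y\<rangle>\<^sub>A\<close>, which needs the
  Hilbert-space adjoint (Riesz representation) and \<open>A A\<^sup>\<dagger> A = A\<close> (projection onto
  \<open>N(A)\<close>), and the \<open>A\<close>-boundedness of operators in \<open>B\<^sub>A\<close>, without which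
  \<open>\<omega>\<^sub>A\<close> and \<open>\<parallel>\<cdot>\<parallel>\<^sub>A\<close> would be suprema of unbounded sets.\<close>

section \<open>Semi-inner products\<close>

lemma scaleC_of_real: "complex_of_real r *\<^sub>C (x::'a::complex_vector) = r *\<^sub>R x"
  by (simp add: scaleR_scaleC)

lemma scaleC_zero_left [simp]: "(0::complex) *\<^sub>C (x::'a::complex_vector) = 0"
  using scaleC_of_real[of 0 x] by simp

lemma scaleC_zero_right [simp]: "c *\<^sub>C (0::'a::complex_vector) = 0"
  using scaleC_scaleC[of c 0 0] by simp

lemma scaleC_minus_one [simp]: "(-1::complex) *\<^sub>C (x::'a::complex_vector) = - x"
  using scaleC_of_real[of "-1" x] by simp

locale semi_inner_product =
  fixes f :: "'a::complex_vector \<Rightarrow> 'a \<Rightarrow> complex"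
  assumes add_left: "f (x + y) z = f x z + f y z"
    and scaleC_left: "f (c *\<^sub>C x) y = c * f x y"
    and cnj_commute: "f x y = cnj (f y x)"
    and self_real_nonneg: "Im (f x x) = 0 \<and> 0 \<le> Re (f x x)"
begin

definition seminorm :: "'a \<Rightarrow> real" where
  "seminorm x = sqrt (Re (f x x))"

lemma add_right: "f x (y + z) = f x y + f x z"
  by (metis add_left complex_cnj_add cnj_commute)

lemma scaleC_right: "f x (c *\<^sub>C y) = cnj c * f x y"
  by (metis complex_cnj_mult cnj_commute scaleC_left)

lemma zero_right [simp]: "f x 0 = 0"
  using scaleC_right[of x 0 0] by simp

lemma minus_left: "f (- x) y = - f x y"
  using scaleC_left[of "-1" x y] by simp

lemma minus_right: "f x (- y) = - f x y"
  using scaleC_right[of x "-1" y] by simp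

lemma diff_left: "f (x - y) z = f x z - f y z"
  by (simp only: diff_conv_add_uminus add_left minus_left)

lemma diff_right: "f x (y - z) = f x y - f x z"
  by (simp only: diff_conv_add_uminus add_right minus_right)

lemma Re_self_nonneg: "0 \<le> Re (f x x)"
  using self_real_nonneg by blast

lemma seminorm_nonneg: "0 \<le> seminorm x"
  by (simp add: seminorm_def Re_self_nonneg)

lemma power2_seminorm: "(seminorm x)\<^sup>2 = Re (f x x)"
  by (simp add: seminorm_def Re_self_nonneg)

lemma Re_self_diff_scaleC:
  "Re (f (x - c *\<^sub>C y) (x - c *\<^sub>C y)) =
     Re (f x x) - 2 * Re (cnj c * f x y) + (cmod c)\<^sup>2 * Re (f y y)"
proof -
  have "f (x - c *\<^sub>C y) (x - c *\<^sub>C y) =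
      (f x x - cnj c * f x y) - (c * f y x - cnj c * (c * f y y))"
    by (simp add: diff_left diff_right scaleC_left scaleC_right algebra_simps)
  also have "c * f y x = cnj (cnj c * f x y)"
    using cnj_commute[of y x] by simp
  also have "cnj c * (c * f y y) = complex_of_real ((cmod c)\<^sup>2) * f y y"
    using complex_norm_square[of c] by (simp add: ac_simps)
  finally show ?thesis
    by simp
qed

lemma eq_zero_if_Re_self_eq_zero:
  assumes null: "Re (f y y) = 0"
  shows "f x y = 0"
proof (rule ccontr)
  assume nonzero: "f x y \<noteq> 0"
  define s where "s = (Re (f x x) + 1) / (cmod (f x y))\<^sup>2"
  define t where "t = complex_of_real s * f x y"
  have "cnj t * f x y = complex_of_real (s * (cmod (f x y))\<^sup>2)"
    unfolding t_def using complex_norm_square[of "f x y"] by (simp add: ac_simps)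
  also have "s * (cmod (f x y))\<^sup>2 = Re (f x x) + 1"
    using nonzero by (simp add: s_def)
  finally have "Re (f (x - t *\<^sub>C y) (x - t *\<^sub>C y)) = - Re (f x x) - 2"
    using Re_self_diff_scaleC[of x t y] null by simp
  then show False
    using Re_self_nonneg[of x] Re_self_nonneg[of "x - t *\<^sub>C y"] by simp
qed

lemma cauchy_schwarz_power2: "(cmod (f x y))\<^sup>2 \<le> Re (f x x) * Re (f y y)"
proof (cases "Re (f y y) = 0")
  case True
  then show ?thesis
    by (simp add: eq_zero_if_Re_self_eq_zero)
next
  case False
  define b where "b = Re (f y y)"
  have "b > 0"
    using False Re_self_nonneg[of y] by (simp add: b_def)
  define t where "t = f x y / complex_of_real b"
  \<comment> \<open>\<open>x - t y\<close> is the component of \<open>x\<close> orthogonal to \<open>y\<close>\<close>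
  have "cnj t * f x y = complex_of_real ((cmod (f x y))\<^sup>2 / b)"
    unfolding t_def using complex_norm_square[of "f x y"] by (simp add: mult.commute)
  moreover have "(cmod t)\<^sup>2 * b = (cmod (f x y))\<^sup>2 / b"
    unfolding t_def using \<open>b > 0\<close> by (simp add: norm_divide power2_eq_square)
  ultimately have "0 \<le> Re (f x x) - (cmod (f x y))\<^sup>2 / b"
    using Re_self_nonneg[of "x - t *\<^sub>C y"] Re_self_diff_scaleC[of x t y] by (simp add: b_def)
  then show ?thesis
    using \<open>b > 0\<close> by (simp add: b_def divide_le_eq)
qed

lemma cauchy_schwarz: "cmod (f x y) \<le> seminorm x * seminorm y"
proof (rule power2_le_imp_le)
  show "(cmod (f x y))\<^sup>2 \<le> (seminorm x * seminorm y)\<^sup>2"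
    using cauchy_schwarz_power2[of x y] by (simp add: power_mult_distrib power2_seminorm)
qed (simp add: seminorm_nonneg)

lemma Re_le_seminorm_mult: "Re (f x y) \<le> seminorm x * seminorm y"
  using cauchy_schwarz[of x y] complex_Re_le_cmod[of "f x y"] by linarith

lemma seminorm_triangle: "seminorm (x + y) \<le> seminorm x + seminorm y"
proof (rule power2_le_imp_le)
  have "Re (f y x) = Re (f x y)"
    using cnj_commute[of y x] by simp
  then have "(seminorm (x + y))\<^sup>2 = (seminorm x)\<^sup>2 + 2 * Re (f x y) + (seminorm y)\<^sup>2"
    by (simp add: power2_seminorm add_left add_right)
  then show "(seminorm (x + y))\<^sup>2 \<le> (seminorm x + seminorm y)\<^sup>2"
    using Re_le_seminorm_mult[of x y] by (simp add: power2_sum)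
qed (simp add: seminorm_nonneg)

lemma seminorm_scaleC: "seminorm (c *\<^sub>C x) = cmod c * seminorm x"
proof -
  have "f (c *\<^sub>C x) (c *\<^sub>C x) = complex_of_real ((cmod c)\<^sup>2) * f x x"
    using complex_norm_square[of c] by (simp add: scaleC_left scaleC_right ac_simps)
  then show ?thesis
    by (simp add: seminorm_def real_sqrt_mult)
qed

text \<open>Reflecting \<open>a\<close> in the line through the unit vector \<open>e\<close> gives
  \<open>v = 2 f(a, e) e - a\<close> with \<open>seminorm v = seminorm a\<close>; apply Cauchy--Schwarz to
  \<open>f v b = 2 f a e f e b - f a b\<close>.\<close>
lemma buzano:
  assumes unit: "seminorm e = 1"
  shows "2 * cmod (f a e * f e b) \<le> seminorm a * seminorm b + cmod (f a b)"
proof -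
  define c where "c = f a e"
  define v where "v = (2 * c) *\<^sub>C e - a"
  have "f e e = 1"
    using unit power2_seminorm[of e] self_real_nonneg[of e] by (simp add: complex_eq_iff)
  moreover have "f e a = cnj c"
    unfolding c_def by (rule cnj_commute)
  ultimately have "f v v = f a a"
    unfolding v_def by (simp add: diff_left diff_right scaleC_left scaleC_right c_def algebra_simps)
  then have "seminorm v = seminorm a"
    by (simp add: seminorm_def)
  moreover have "f v b = 2 * c * f e b - f a b"
    unfolding v_def by (simp add: diff_left scaleC_left)
  ultimately have "cmod (2 * c * f e b - f a b) \<le> seminorm a * seminorm b"
    using cauchy_schwarz[of v b] by simp
  moreover have "cmod (2 * c * f e b) \<le> cmod (2 * c * f e b - f a b) + cmod (f a b)"
    using norm_triangle_ineq[of "2 * c * f e b - f a b" "f a b"] by simp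
  ultimately show ?thesis
    by (simp add: c_def norm_mult)
qed

end

section \<open>Projections, Riesz representation and adjoints\<close>

lemma bounded_clinear_add: "bounded_clinear T \<Longrightarrow> T (x + y) = T x + T y"
  by (simp add: bounded_clinear_def)

lemma bounded_clinear_scaleC: "bounded_clinear T \<Longrightarrow> T (c *\<^sub>C x) = c *\<^sub>C T x"
  by (simp add: bounded_clinear_def)

lemma bounded_clinear_imp_bounded_linear:
  assumes T: "bounded_clinear T"
  shows "bounded_linear T"
proof -
  obtain K where "\<And>x. norm (T x) \<le> norm x * K"
    using T unfolding bounded_clinear_def by blast
  then show ?thesis
    using T by (intro bounded_linear_intro) (simp_all add: bounded_clinear_def flip: scaleC_of_real)
qed

lemma bounded_clinear_compose:
  assumes S: "bounded_clinear S" and T: "bounded_clinear T"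
  shows "bounded_clinear (\<lambda>x. S (T x))"
proof -
  obtain KS where KS: "\<And>x. norm (S x) \<le> norm x * KS" and "KS > 0"
    using bounded_linear.pos_bounded[OF bounded_clinear_imp_bounded_linear[OF S]] by blast
  obtain KT where KT: "\<And>x. norm (T x) \<le> norm x * KT"
    using T unfolding bounded_clinear_def by blast
  have "norm (S (T x)) \<le> norm x * (KT * KS)" for x
    using order_trans[OF KS mult_right_mono[OF KT]] \<open>KS > 0\<close> by (simp add: ac_simps)
  then show ?thesis
    using S T unfolding bounded_clinear_def by auto
qed

interpretation cinner: semi_inner_product "cinner :: 'a::complex_inner \<Rightarrow> 'a \<Rightarrow> complex"
  rewrites "semi_inner_product.seminorm cinner = (norm :: 'a \<Rightarrow> real)"
proof -
  show sip: "semi_inner_product (cinner :: 'a \<Rightarrow> 'a \<Rightarrow> complex)"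
    by unfold_locales
      (auto simp: cinner_add_left cinner_scaleC_left cinner_self_nonneg intro: cinner_commute)
  show "semi_inner_product.seminorm cinner = (norm :: 'a \<Rightarrow> real)"
    by (simp add: fun_eq_iff semi_inner_product.seminorm_def[OF sip] norm_eq_sqrt_cinner)
qed

lemma cinner_ext_right:
  assumes "\<And>z. cinner z u = cinner z (v::'a::complex_inner)"
  shows "u = v"
  using assms[of "u - v"] cinner_self_eq_zero[of "u - v"] by (simp add: cinner.diff_right)

lemma parallelogram_law:
  "(norm (a + b))\<^sup>2 + (norm (a - b))\<^sup>2 = 2 * (norm a)\<^sup>2 + 2 * (norm (b::'a::complex_inner))\<^sup>2"
  by (simp add: cinner.power2_seminorm cinner.add_left cinner.add_right
      cinner.diff_left cinner.diff_right)

lemma bounded_linear_cinner_left: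
  "bounded_linear (\<lambda>x::'a::complex_inner. cinner x y)"
proof (rule bounded_linear_intro)
  fix r x
  show "cinner (r *\<^sub>R x) y = r *\<^sub>R cinner x y"
    by (simp add: cinner.scaleC_left scaleR_conv_of_real flip: scaleC_of_real)
next
  fix x
  show "norm (cinner x y) \<le> norm x * norm y"
    by (rule cinner.cauchy_schwarz)
qed (rule cinner.add_left)

lemma closed_kernel: "bounded_linear f \<Longrightarrow> closed {x. f x = 0}"
  by (intro closed_Collect_eq linear_continuous_on continuous_on_const)

lemma minimizing_sequence_Cauchy:
  fixes w :: "'a::complex_inner"
  assumes "0 \<le> d"
    and midpoint: "\<And>n k. d \<le> norm (w - (1/2::real) *\<^sub>R (m n + m k))"
    and close: "\<And>n. (norm (w - m n))\<^sup>2 < d\<^sup>2 + inverse (real (Suc n))"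
  shows "Cauchy m"
proof -
  have bound: "(norm (m k - m n))\<^sup>2 \<le> 2 * inverse (real (Suc n)) + 2 * inverse (real (Suc k))"
    for n k
  proof -
    have "w - m n + (w - m k) = 2 *\<^sub>R (w - (1/2::real) *\<^sub>R (m n + m k))"
      by (simp add: algebra_simps scaleR_2)
    then have "(2 * d)\<^sup>2 \<le> (norm (w - m n + (w - m k)))\<^sup>2"
      using midpoint[of n k] \<open>0 \<le> d\<close> by (simp add: power_mono)
    moreover have "w - m n - (w - m k) = m k - m n"
      by simp
    ultimately show ?thesis
      using parallelogram_law[of "w - m n" "w - m k"] close[of n] close[of k]
      by (simp add: power_mult_distrib)
  qed
  show "Cauchy m"
  proof (rule CauchyI)
    fix e :: real
    assume "0 < e"
    then obtain N where N: "inverse (real (Suc N)) < e\<^sup>2 / 4"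
      using reals_Archimedean[of "e\<^sup>2 / 4"] by auto
    have "norm (m k - m n) < e" if "N \<le> k" "N \<le> n" for k n
    proof -
      have "inverse (real (Suc n)) \<le> inverse (real (Suc N))"
        "inverse (real (Suc k)) \<le> inverse (real (Suc N))"
        using that by (simp_all add: le_imp_inverse_le)
      then have "(norm (m k - m n))\<^sup>2 < e\<^sup>2"
        using bound[of k n] N by linarith
      then show ?thesis
        using \<open>0 < e\<close> power2_less_imp_less[of "norm (m k - m n)" e] by simp
    qed
    then show "\<exists>M. \<forall>k\<ge>M. \<forall>n\<ge>M. norm (m k - m n) < e"
      by blast
  qed
qed

lemma nearest_point_exists:
  fixes M :: "'a::chilbert_space set"
  assumes "closed M" and "convex M" and "M \<noteq> {}"
  shows "\<exists>p\<in>M. \<forall>m\<in>M. norm (w - p) \<le> norm (w - m)"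
proof -
  define d where "d = Inf ((\<lambda>m. norm (w - m)) ` M)"
  have d_le: "d \<le> norm (w - m)" if "m \<in> M" for m
    unfolding d_def using that by (intro cInf_lower bdd_belowI[of _ 0]) auto
  have "0 \<le> d"
    unfolding d_def using \<open>M \<noteq> {}\<close> by (intro cInf_greatest) auto
  have "\<exists>m\<in>M. (norm (w - m))\<^sup>2 < d\<^sup>2 + inverse (real (Suc n))" for n
  proof -
    have "d < sqrt (d\<^sup>2 + inverse (real (Suc n)))"
      using \<open>0 \<le> d\<close> real_sqrt_less_mono[of "d\<^sup>2" "d\<^sup>2 + inverse (real (Suc n))"] by simp
    then obtain m where "m \<in> M" and "norm (w - m) < sqrt (d\<^sup>2 + inverse (real (Suc n)))"
      using cInf_lessD[of "(\<lambda>m. norm (w - m)) ` M"] \<open>M \<noteq> {}\<close> unfolding d_def by auto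
    then show ?thesis
      by (metis real_sqrt_abs real_sqrt_less_iff abs_norm_cancel)
  qed
  then obtain m where m: "\<And>n. m n \<in> M"
    and close: "\<And>n. (norm (w - m n))\<^sup>2 < d\<^sup>2 + inverse (real (Suc n))"
    by metis
  have "d \<le> norm (w - (1/2::real) *\<^sub>R (m n + m k))" for n k
    using d_le convexD[OF \<open>convex M\<close> m m, of "1/2" "1/2"] by (simp add: scaleR_right_distrib)
  then have "Cauchy m"
    using \<open>0 \<le> d\<close> close by (intro minimizing_sequence_Cauchy)
  then obtain p where lim: "m \<longlonglongrightarrow> p"
    using Cauchy_convergent_iff convergent_def by blast
  then have "p \<in> M"
    using \<open>closed M\<close> m closed_sequentially by blast
  have "(\<lambda>n. (norm (w - m n))\<^sup>2) \<longlonglongrightarrow> (norm (w - p))\<^sup>2"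
    by (intro tendsto_intros lim)
  then have "(norm (w - p))\<^sup>2 \<le> d\<^sup>2"
    using LIMSEQ_inverse_real_of_nat_add[of "d\<^sup>2"] close
    by (intro LIMSEQ_le) (auto intro: less_imp_le)
  then have "norm (w - p) \<le> d"
    using \<open>0 \<le> d\<close> by (rule power2_le_imp_le)
  then show ?thesis
    using \<open>p \<in> M\<close> d_le order_trans by blast
qed

lemma nearest_point_orthogonal:
  fixes M :: "'a::complex_inner set"
  assumes add: "\<And>x y. x \<in> M \<Longrightarrow> y \<in> M \<Longrightarrow> x + y \<in> M"
    and scaleC: "\<And>c x. x \<in> M \<Longrightarrow> c *\<^sub>C x \<in> M"
    and "p \<in> M" and nearest: "\<And>m. m \<in> M \<Longrightarrow> norm (w - p) \<le> norm (w - m)"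
    and "m \<in> M"
  shows "cinner (w - p) m = 0"
proof (rule ccontr)
  define c where "c = cinner (w - p) m"
  assume "cinner (w - p) m \<noteq> 0"
  then have "0 < (cmod c)\<^sup>2"
    by (simp add: c_def)
  define s where "s = 1 / ((norm m)\<^sup>2 + 1)"
  have "0 < s" and "s * (norm m)\<^sup>2 < 1"
    by (simp_all add: s_def add_nonneg_pos divide_less_eq)
  define t where "t = complex_of_real s * c"
  \<comment> \<open>moving from \<open>p\<close> towards \<open>p + t m\<close> strictly decreases the distance to \<open>w\<close>\<close>
  have "p + t *\<^sub>C m \<in> M"
    using \<open>p \<in> M\<close> \<open>m \<in> M\<close> by (intro add scaleC)
  then have "(norm (w - p))\<^sup>2 \<le> (norm ((w - p) - t *\<^sub>C m))\<^sup>2"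
    using nearest by (simp add: diff_diff_eq power_mono)
  also have "\<dots> = (norm (w - p))\<^sup>2 - 2 * s * (cmod c)\<^sup>2 + s\<^sup>2 * (cmod c)\<^sup>2 * (norm m)\<^sup>2"
  proof -
    have "cnj t * c = complex_of_real (s * (cmod c)\<^sup>2)"
      unfolding t_def using complex_norm_square[of c] by (simp add: ac_simps)
    moreover have "(cmod t)\<^sup>2 = s\<^sup>2 * (cmod c)\<^sup>2"
      unfolding t_def using \<open>0 < s\<close> by (simp add: norm_mult power_mult_distrib)
    ultimately show ?thesis
      using cinner.Re_self_diff_scaleC[of "w - p" t m]
      by (simp add: cinner.power2_seminorm flip: c_def)
  qed
  finally have "0 \<le> s * (cmod c)\<^sup>2 * (s * (norm m)\<^sup>2 - 2)"
    by (simp add: algebra_simps power2_eq_square)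
  moreover have "s * (cmod c)\<^sup>2 * (s * (norm m)\<^sup>2 - 2) < 0"
    using \<open>0 < s\<close> \<open>0 < (cmod c)\<^sup>2\<close> \<open>s * (norm m)\<^sup>2 < 1\<close> by (intro mult_pos_neg) simp_all
  ultimately show False
    by simp
qed

lemma orthogonal_projection_exists:
  fixes M :: "'a::chilbert_space set"
  assumes "closed M" and "0 \<in> M"
    and add: "\<And>x y. x \<in> M \<Longrightarrow> y \<in> M \<Longrightarrow> x + y \<in> M"
    and scaleC: "\<And>c x. x \<in> M \<Longrightarrow> c *\<^sub>C x \<in> M"
  shows "\<exists>p\<in>M. \<forall>m\<in>M. cinner (w - p) m = 0"
proof -
  have "convex M"
    by (rule convexI) (simp add: add scaleC flip: scaleC_of_real)
  then obtain p where "p \<in> M" and "\<forall>m\<in>M. norm (w - p) \<le> norm (w - m)"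
    using nearest_point_exists[OF \<open>closed M\<close>] \<open>0 \<in> M\<close> by blast
  then show ?thesis
    using nearest_point_orthogonal[OF add scaleC] by blast
qed

lemma riesz_representation:
  fixes f :: "'a::chilbert_space \<Rightarrow> complex"
  assumes "bounded_linear f" and scaleC: "\<And>c x. f (c *\<^sub>C x) = c * f x"
  shows "\<exists>v. \<forall>x. f x = cinner x v"
proof (cases "\<forall>x. f x = 0")
  case True
  then show ?thesis
    by (intro exI[of _ 0]) simp
next
  case False
  then obtain u where "f u \<noteq> 0"
    by blast
  interpret f: bounded_linear f
    by fact
  obtain p where "f p = 0" and orth: "\<And>m. f m = 0 \<Longrightarrow> cinner (u - p) m = 0"
    using orthogonal_projection_exists[of "{x. f x = 0}" u] closed_kernel[OF f.bounded_linear_axioms]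
    by (auto simp: f.add scaleC)
  define q where "q = u - p"
  have "f q \<noteq> 0"
    using \<open>f u \<noteq> 0\<close> \<open>f p = 0\<close> by (simp add: q_def f.diff)
  then have "cinner q q \<noteq> 0"
    by (auto simp: cinner_self_eq_zero)
  have "f x = cinner x (cnj (f q / cinner q q) *\<^sub>C q)" for x
  proof -
    have "f (f x *\<^sub>C q - f q *\<^sub>C x) = 0"
      by (simp add: f.diff scaleC)
    then have "cinner (f x *\<^sub>C q - f q *\<^sub>C x) q = 0"
      using orth cinner.cnj_commute[of _ q] unfolding q_def by fastforce
    then have "f x * cinner q q = f q * cinner x q"
      by (simp add: cinner.diff_left cinner.scaleC_left)
    then show ?thesis
      using \<open>cinner q q \<noteq> 0\<close> by (simp add: cinner.scaleC_right field_simps)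
  qed
  then show ?thesis
    by blast
qed

lemma adjoint_pair_bounded:
  fixes T S :: "'a::complex_inner \<Rightarrow> 'a"
  assumes T: "bounded_clinear T" and adjoint: "\<And>x y. cinner (T x) y = cinner x (S y)"
  shows "bounded_clinear S"
proof -
  obtain K where K: "\<And>x. norm (T x) \<le> norm x * K" and "K > 0"
    using bounded_linear.pos_bounded[OF bounded_clinear_imp_bounded_linear[OF T]] by blast
  have "norm (S y) \<le> norm y * K" for y
  proof (cases "S y = 0")
    case True
    then show ?thesis
      using \<open>K > 0\<close> by simp
  next
    case False
    have "norm (S y) * norm (S y) = Re (cinner (T (S y)) y)"
      by (simp add: adjoint flip: cinner.power2_seminorm power2_eq_square)
    also have "\<dots> \<le> norm (T (S y)) * norm y"
      by (rule cinner.Re_le_seminorm_mult)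
    also have "\<dots> \<le> norm (S y) * (norm y * K)"
      using mult_right_mono[OF K[of "S y"], of "norm y"] by (simp add: ac_simps)
    finally show ?thesis
      using False by (simp add: mult_le_cancel_left)
  qed
  moreover have "S (x + y) = S x + S y" for x y
    by (rule cinner_ext_right) (simp add: cinner.add_right flip: adjoint)
  moreover have "S (c *\<^sub>C x) = c *\<^sub>C S x" for c x
    by (rule cinner_ext_right) (simp add: cinner.scaleC_right flip: adjoint)
  ultimately show ?thesis
    unfolding bounded_clinear_def by blast
qed

lemma adjoint_exists:
  fixes T :: "'a::chilbert_space \<Rightarrow> 'a"
  assumes T: "bounded_clinear T"
  shows "\<exists>S. bounded_clinear S \<and> (\<forall>x y. cinner (T x) y = cinner x (S y))"
proof -
  have "\<exists>v. \<forall>x. cinner (T x) y = cinner x v" for y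
  proof (rule riesz_representation)
    show "bounded_linear (\<lambda>x. cinner (T x) y)"
      using bounded_linear_compose[OF bounded_linear_cinner_left bounded_clinear_imp_bounded_linear[OF T]] .
  qed (simp add: bounded_clinear_scaleC[OF T] cinner.scaleC_left)
  then obtain S where "\<And>x y. cinner (T x) y = cinner x (S y)"
    by metis
  then show ?thesis
    using adjoint_pair_bounded[OF T] by blast
qed

lemma cinner_adj:
  fixes T :: "'a::chilbert_space \<Rightarrow> 'a"
  assumes "bounded_clinear T"
  shows "cinner (T x) y = cinner x (adj T y)"
proof -
  obtain S where S: "bounded_clinear S \<and> (\<forall>x y. cinner (T x) y = cinner x (S y))"
    using adjoint_exists[OF assms] by blast
  have "adj T = S"
    unfolding adj_def
  proof (rule the_equality)
    fix S'
    assume "bounded_clinear S' \<and> (\<forall>x y. cinner (T x) y = cinner x (S' y))"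
    then show "S' = S"
      using S by (metis ext cinner_ext_right)
  qed (rule S)
  then show ?thesis
    using S by simp
qed

lemma mp_inv_apply_range:
  fixes A :: "'a::chilbert_space \<Rightarrow> 'a"
  assumes "bounded_clinear A"
  shows "A (mp_inv A (A w)) = A w"
proof -
  interpret A: bounded_linear A
    by (rule bounded_clinear_imp_bounded_linear) fact
  obtain p where "A p = 0" and orth: "\<And>n. A n = 0 \<Longrightarrow> cinner (w - p) n = 0"
    using orthogonal_projection_exists[of "{x. A x = 0}" w] closed_kernel[OF A.bounded_linear_axioms]
    by (auto simp: A.add bounded_clinear_scaleC[OF assms])
  have "\<exists>!z. (\<forall>n. A n = 0 \<longrightarrow> cinner z n = 0) \<and> A z = A w"
  proof (rule ex1I)
    show "(\<forall>n. A n = 0 \<longrightarrow> cinner (w - p) n = 0) \<and> A (w - p) = A w"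
      using orth \<open>A p = 0\<close> by (simp add: A.diff)
  next
    fix z
    assume z: "(\<forall>n. A n = 0 \<longrightarrow> cinner z n = 0) \<and> A z = A w"
    then have "A (z - (w - p)) = 0"
      using \<open>A p = 0\<close> by (simp add: A.diff)
    then have "cinner (z - (w - p)) (z - (w - p)) = 0"
      using z orth by (simp add: cinner.diff_left)
    then show "z = w - p"
      by (simp add: cinner_self_eq_zero)
  qed
  from theI'[OF this] show ?thesis
    unfolding mp_inv_def by (rule conjunct2)
qed

section \<open>Operators in \<open>B\<^sub>A\<close> are \<open>A\<close>-bounded\<close>

lemma positive_op_selfadjoint:
  assumes "positive_op A"
  shows "cinner (A x) y = cinner x (A y)"
proof -
  have A: "bounded_clinear A" and real: "\<And>z. Im (cinner (A z) z) = 0"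
    using assms unfolding positive_op_def by blast+
  define a b where "a = cinner (A x) y" and "b = cinner (A y) x"
  \<comment> \<open>polarization: \<open>\<langle>A z, z\<rangle>\<close> is real for \<open>z = x + y\<close> and \<open>z = x + i y\<close>\<close>
  have "cinner (A (x + y)) (x + y) = cinner (A x) x + a + b + cinner (A y) y"
    unfolding a_def b_def by (simp add: bounded_clinear_add[OF A] cinner.add_left cinner.add_right)
  then have "Im a + Im b = 0"
    using real[of "x + y"] real[of x] real[of y] by simp
  moreover have "cinner (A (x + \<i> *\<^sub>C y)) (x + \<i> *\<^sub>C y) =
      cinner (A x) x - \<i> * a + \<i> * b + cinner (A y) y"
    unfolding a_def b_def
    by (simp add: bounded_clinear_add[OF A] bounded_clinear_scaleC[OF A] cinner.add_left
        cinner.add_right cinner.scaleC_left cinner.scaleC_right algebra_simps)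
  then have "Re b - Re a = 0"
    using real[of "x + \<i> *\<^sub>C y"] real[of x] real[of y] by simp
  ultimately have "a = cnj b"
    by (simp add: complex_eq_iff)
  then show ?thesis
    unfolding a_def b_def using cinner.cnj_commute[of x "A y"] by simp
qed

definition A_bounded :: "('a::complex_inner \<Rightarrow> 'a) \<Rightarrow> ('a \<Rightarrow> 'a) \<Rightarrow> bool" where
  "A_bounded A T \<longleftrightarrow> (\<exists>C\<ge>0. \<forall>x. A_seminorm A (T x) \<le> C * A_seminorm A x)"

locale positive_operator =
  fixes A :: "'a::complex_inner \<Rightarrow> 'a"
  assumes positive: "positive_op A"
begin

lemma bounded_clinear_A: "bounded_clinear A"
  using positive unfolding positive_op_def by blast

sublocale A: semi_inner_product "A_inner A"
  rewrites "semi_inner_product.seminorm (A_inner A) = A_seminorm A"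
proof -
  show sip: "semi_inner_product (A_inner A)"
  proof
    fix x y z :: 'a and c
    show "A_inner A (x + y) z = A_inner A x z + A_inner A y z"
      by (simp add: A_inner_def bounded_clinear_add[OF bounded_clinear_A] cinner.add_left)
    show "A_inner A (c *\<^sub>C x) y = c * A_inner A x y"
      by (simp add: A_inner_def bounded_clinear_scaleC[OF bounded_clinear_A] cinner.scaleC_left)
    show "A_inner A x y = cnj (A_inner A y x)"
      using positive_op_selfadjoint[OF positive, of y x] cinner.cnj_commute[of "A x" y]
      by (simp add: A_inner_def)
    show "Im (A_inner A x x) = 0 \<and> 0 \<le> Re (A_inner A x x)"
      using positive unfolding positive_op_def A_inner_def by blast
  qed
  show "semi_inner_product.seminorm (A_inner A) = A_seminorm A"
    by (simp add: fun_eq_iff semi_inner_product.seminorm_def[OF sip] A_seminorm_def)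
qed

lemma A_seminorm_le_norm: "\<exists>K\<ge>0. \<forall>x. A_seminorm A x \<le> K * norm x"
proof -
  obtain K where K: "\<And>x. norm (A x) \<le> norm x * K" and "K > 0"
    using bounded_linear.pos_bounded[OF bounded_clinear_imp_bounded_linear[OF bounded_clinear_A]]
    by blast
  have "A_seminorm A x \<le> sqrt K * norm x" for x
  proof (rule power2_le_imp_le)
    have "(A_seminorm A x)\<^sup>2 \<le> norm (A x) * norm x"
      using cinner.Re_le_seminorm_mult[of "A x" x] by (simp add: A.power2_seminorm A_inner_def)
    also have "\<dots> \<le> K * (norm x)\<^sup>2"
      using mult_right_mono[OF K[of x], of "norm x"] by (simp add: power2_eq_square ac_simps)
    also have "\<dots> = (sqrt K * norm x)\<^sup>2"
      using \<open>K > 0\<close> by (simp add: power_mult_distrib)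
    finally show "(A_seminorm A x)\<^sup>2 \<le> (sqrt K * norm x)\<^sup>2" .
  qed (simp add: \<open>K > 0\<close> less_imp_le)
  then show ?thesis
    using \<open>K > 0\<close> by (intro exI[of _ "sqrt K"]) auto
qed

lemma A_selfadjoint_funpow:
  assumes sym: "\<And>u v. A_inner A (R u) v = A_inner A u (R v)"
  shows "A_inner A ((R ^^ k) u) v = A_inner A u ((R ^^ k) v)"
proof (induction k arbitrary: v)
  case 0
  then show ?case
    by simp
next
  case (Suc k)
  have "A_inner A ((R ^^ Suc k) u) v = A_inner A ((R ^^ k) u) (R v)"
    by (simp add: sym)
  also have "\<dots> = A_inner A u ((R ^^ k) (R v))"
    by (rule Suc.IH)
  finally show ?case
    by (simp add: funpow_swap1)
qed

lemma A_seminorm_selfadjoint_power: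
  assumes sym: "\<And>u v. A_inner A (R u) v = A_inner A u (R v)"
    and unit: "A_seminorm A x = 1"
  shows "A_seminorm A (R x) ^ (2 ^ m) \<le> A_seminorm A ((R ^^ (2 ^ m)) x)"
proof (induction m)
  case 0
  then show ?case
    by simp
next
  case (Suc m)
  let ?y = "(R ^^ (2 ^ m)) x"
  have "A_seminorm A (R x) ^ (2 ^ Suc m) = (A_seminorm A (R x) ^ (2 ^ m))\<^sup>2"
    by (simp add: power_mult[symmetric] mult.commute)
  also have "\<dots> \<le> (A_seminorm A ?y)\<^sup>2"
    using Suc.IH by (simp add: power_mono A.seminorm_nonneg)
  also have "\<dots> = Re (A_inner A x ((R ^^ (2 ^ m)) ?y))"
    by (simp add: A.power2_seminorm A_selfadjoint_funpow[OF sym])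
  also have "\<dots> \<le> A_seminorm A ((R ^^ (2 ^ m)) ?y)"
    using A.Re_le_seminorm_mult[of x] unit by simp
  also have "(R ^^ (2 ^ m)) ?y = (R ^^ (2 ^ Suc m)) x"
    by (simp add: mult_2 funpow_add)
  finally show ?case .
qed

text \<open>A bounded \<open>A\<close>-selfadjoint operator \<open>R\<close> satisfies \<open>\<parallel>R\<parallel>\<^sub>A \<le> \<parallel>R\<parallel>\<close>: if
  \<open>\<parallel>R x\<parallel>\<^sub>A = r K\<close> with \<open>r > 1\<close> for an \<open>A\<close>-unit vector \<open>x\<close>, the estimate
  \<open>\<parallel>R x\<parallel>\<^sub>A\<^bsup>2\<^sup>m\<^esup> \<le> \<parallel>R\<^bsup>2\<^sup>m\<^esup> x\<parallel>\<^sub>A \<le> C K\<^bsup>2\<^sup>m\<^esup>\<close> forces \<open>r\<^bsup>2\<^sup>m\<^esup> \<le> C\<close> for all \<open>m\<close>.\<close>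
lemma A_selfadjoint_unit_bound:
  assumes K: "\<And>z. norm (R z) \<le> norm z * K" and "K > 0"
    and sym: "\<And>u v. A_inner A (R u) v = A_inner A u (R v)"
    and unit: "A_seminorm A x = 1"
  shows "A_seminorm A (R x) \<le> K"
proof (rule ccontr)
  assume "\<not> A_seminorm A (R x) \<le> K"
  define r where "r = A_seminorm A (R x) / K"
  have "1 < r"
    using \<open>\<not> A_seminorm A (R x) \<le> K\<close> \<open>K > 0\<close> by (simp add: r_def)
  obtain C where "C \<ge> 0" and C: "\<And>z. A_seminorm A z \<le> C * norm z"
    using A_seminorm_le_norm by blast
  have norm_funpow: "norm ((R ^^ k) x) \<le> K ^ k * norm x" for k
  proof (induction k)
    case (Suc k)
    have "norm ((R ^^ Suc k) x) \<le> norm ((R ^^ k) x) * K"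
      by (simp add: K)
    also have "\<dots> \<le> K ^ k * norm x * K"
      using Suc.IH \<open>K > 0\<close> by (simp add: mult_right_mono)
    finally show ?case
      by (simp add: ac_simps)
  qed simp
  have "r ^ (2 ^ m) \<le> C * norm x" for m
  proof -
    have "A_seminorm A (R x) ^ (2 ^ m) \<le> C * (K ^ (2 ^ m) * norm x)"
      using A_seminorm_selfadjoint_power[OF sym unit, of m] C[of "(R ^^ (2 ^ m)) x"]
        mult_left_mono[OF norm_funpow[of "2 ^ m"] \<open>C \<ge> 0\<close>]
      by linarith
    then show ?thesis
      using \<open>K > 0\<close> by (simp add: r_def power_divide divide_le_eq ac_simps)
  qed
  moreover obtain m where "C * norm x < r ^ m"
    using real_arch_pow[OF \<open>1 < r\<close>] by blast
  moreover have "r ^ m \<le> r ^ (2 ^ m)"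
    using \<open>1 < r\<close> by (intro power_increasing) (simp_all add: less_imp_le)
  ultimately show False
    by (meson leD order_less_le_trans)
qed

lemma A_selfadjoint_A_bounded:
  assumes R: "bounded_clinear R"
    and sym: "\<And>u v. A_inner A (R u) v = A_inner A u (R v)"
  shows "A_bounded A R"
proof -
  obtain K where K: "\<And>x. norm (R x) \<le> norm x * K" and "K > 0"
    using bounded_linear.pos_bounded[OF bounded_clinear_imp_bounded_linear[OF R]] by blast
  have "A_seminorm A (R x) \<le> K * A_seminorm A x" for x
  proof (cases "A_seminorm A x = 0")
    case True
    have "(A_seminorm A (R x))\<^sup>2 \<le> A_seminorm A x * A_seminorm A (R (R x))"
      using A.Re_le_seminorm_mult[of x "R (R x)"] by (simp add: A.power2_seminorm sym)
    then show ?thesis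
      using True by simp
  next
    case False
    then have pos: "0 < A_seminorm A x"
      using A.seminorm_nonneg[of x] by simp
    define c where "c = complex_of_real (1 / A_seminorm A x)"
    have "A_seminorm A (c *\<^sub>C x) = 1"
      using pos by (simp add: A.seminorm_scaleC c_def norm_divide)
    then have "A_seminorm A (R (c *\<^sub>C x)) \<le> K"
      by (rule A_selfadjoint_unit_bound[OF K \<open>K > 0\<close> sym])
    then show ?thesis
      using pos by (simp add: bounded_clinear_scaleC[OF R] A.seminorm_scaleC c_def norm_divide field_simps)
  qed
  then show ?thesis
    unfolding A_bounded_def using \<open>K > 0\<close> by (intro exI[of _ K]) auto
qed

lemma B_A_imp_A_bounded:
  assumes "T \<in> B_A A"
  shows "A_bounded A T"
proof -
  obtain S where T: "bounded_clinear T" and S: "bounded_clinear S"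
    and adjoint: "\<And>x y. A_inner A (T x) y = A_inner A x (S y)"
    using assms unfolding B_A_def by blast
  \<comment> \<open>\<open>S T\<close> is \<open>A\<close>-selfadjoint and \<open>\<parallel>T x\<parallel>\<^sub>A\<^sup>2 = \<langle>x, S T x\<rangle>\<^sub>A\<close>\<close>
  have "A_inner A (S (T u)) v = A_inner A u (S (T v))" for u v
  proof -
    have "A_inner A (S (T u)) v = cnj (A_inner A v (S (T u)))"
      by (rule A.cnj_commute)
    also have "A_inner A v (S (T u)) = A_inner A (T v) (T u)"
      by (simp add: adjoint)
    also have "cnj (A_inner A (T v) (T u)) = A_inner A (T u) (T v)"
      by (simp add: A.cnj_commute[of "T u" "T v"])
    also have "\<dots> = A_inner A u (S (T v))"
      by (rule adjoint)
    finally show ?thesis .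
  qed
  then obtain C where "C \<ge> 0" and C: "\<And>x. A_seminorm A (S (T x)) \<le> C * A_seminorm A x"
    using A_selfadjoint_A_bounded[OF bounded_clinear_compose[OF S T]]
    unfolding A_bounded_def by blast
  have "A_seminorm A (T x) \<le> sqrt C * A_seminorm A x" for x
  proof (rule power2_le_imp_le)
    have "(A_seminorm A (T x))\<^sup>2 = Re (A_inner A x (S (T x)))"
      by (simp add: A.power2_seminorm adjoint)
    also have "\<dots> \<le> A_seminorm A x * (C * A_seminorm A x)"
      using A.Re_le_seminorm_mult[of x "S (T x)"] mult_left_mono[OF C A.seminorm_nonneg]
      by (rule order_trans)
    also have "\<dots> = (sqrt C * A_seminorm A x)\<^sup>2"
      using \<open>C \<ge> 0\<close> by (simp add: power_mult_distrib power2_eq_square)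
    finally show "(A_seminorm A (T x))\<^sup>2 \<le> (sqrt C * A_seminorm A x)\<^sup>2" .
  qed (simp add: \<open>C \<ge> 0\<close> A.seminorm_nonneg)
  then show ?thesis
    unfolding A_bounded_def using \<open>C \<ge> 0\<close> by (intro exI[of _ "sqrt C"]) auto
qed

lemma A_bounded_compose:
  assumes "A_bounded A S" and "A_bounded A T"
  shows "A_bounded A (S \<circ> T)"
proof -
  obtain CS CT where "CS \<ge> 0" and CS: "\<And>x. A_seminorm A (S x) \<le> CS * A_seminorm A x"
    and CT: "\<And>x. A_seminorm A (T x) \<le> CT * A_seminorm A x" and "CT \<ge> 0"
    using assms unfolding A_bounded_def by blast
  have "A_seminorm A (S (T x)) \<le> (CS * CT) * A_seminorm A x" for x
    using order_trans[OF CS mult_left_mono[OF CT \<open>CS \<ge> 0\<close>]] by (simp add: ac_simps)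
  then show ?thesis
    unfolding A_bounded_def using \<open>CS \<ge> 0\<close> \<open>CT \<ge> 0\<close> by (auto intro!: exI[of _ "CS * CT"])
qed

lemma A_bounded_add:
  assumes "A_bounded A S" and "A_bounded A T"
  shows "A_bounded A (\<lambda>x. S x + T x)"
proof -
  obtain CS CT where "CS \<ge> 0" and CS: "\<And>x. A_seminorm A (S x) \<le> CS * A_seminorm A x"
    and CT: "\<And>x. A_seminorm A (T x) \<le> CT * A_seminorm A x" and "CT \<ge> 0"
    using assms unfolding A_bounded_def by blast
  have "A_seminorm A (S x + T x) \<le> (CS + CT) * A_seminorm A x" for x
    using A.seminorm_triangle[of "S x" "T x"] CS[of x] CT[of x] by (simp add: distrib_right)
  then show ?thesis
    unfolding A_bounded_def using \<open>CS \<ge> 0\<close> \<open>CT \<ge> 0\<close> by (auto intro!: exI[of _ "CS + CT"])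
qed

lemma A_numrad_ge:
  assumes "A_bounded A T" and "A_seminorm A x = 1"
  shows "cmod (A_inner A (T x) x) \<le> A_numrad A T"
  unfolding A_numrad_def
proof (rule cSup_upper)
  obtain C where C: "\<And>x. A_seminorm A (T x) \<le> C * A_seminorm A x"
    using assms(1) unfolding A_bounded_def by blast
  show "bdd_above {cmod (A_inner A (T x) x) |x. A_seminorm A x = 1}"
  proof (rule bdd_aboveI)
    fix r
    assume "r \<in> {cmod (A_inner A (T x) x) |x. A_seminorm A x = 1}"
    then obtain z where "r = cmod (A_inner A (T z) z)" and "A_seminorm A z = 1"
      by blast
    then show "r \<le> C"
      using A.cauchy_schwarz[of "T z" z] C[of z] by simp
  qed
qed (use assms(2) in blast)

lemma A_opnorm_ge:
  assumes "A_bounded A T" and "A_seminorm A x = 1"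
  shows "A_seminorm A (T x) \<le> A_opnorm A T"
  unfolding A_opnorm_def
proof (rule cSup_upper)
  obtain C where C: "\<And>x. A_seminorm A (T x) \<le> C * A_seminorm A x"
    using assms(1) unfolding A_bounded_def by blast
  show "bdd_above {A_seminorm A (T x) |x. A_seminorm A x = 1}"
  proof (rule bdd_aboveI)
    fix r
    assume "r \<in> {A_seminorm A (T x) |x. A_seminorm A x = 1}"
    then obtain z where "r = A_seminorm A (T z)" and "A_seminorm A z = 1"
      by blast
    then show "r \<le> C"
      using C[of z] by simp
  qed
qed (use assms(2) in blast)

lemma A_unit_exists:
  assumes "A \<noteq> (\<lambda>x. 0)"
  shows "\<exists>x. A_seminorm A x = 1"
proof -
  obtain y where "A y \<noteq> 0"
    using assms by blast
  have "A_seminorm A y \<noteq> 0"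
  proof
    assume "A_seminorm A y = 0"
    then have "cinner (A y) (A y) = 0"
      using A.cauchy_schwarz[of y "A y"] by (simp add: A_inner_def)
    then show False
      using \<open>A y \<noteq> 0\<close> by (simp add: cinner_self_eq_zero)
  qed
  then have "0 < A_seminorm A y"
    using A.seminorm_nonneg[of y] by simp
  then have "A_seminorm A (complex_of_real (1 / A_seminorm A y) *\<^sub>C y) = 1"
    by (simp add: A.seminorm_scaleC norm_divide)
  then show ?thesis
    by blast
qed

lemma A_numrad_le:
  assumes "A \<noteq> (\<lambda>x. 0)" and "\<And>x. A_seminorm A x = 1 \<Longrightarrow> cmod (A_inner A (T x) x) \<le> c"
  shows "A_numrad A T \<le> c"
  unfolding A_numrad_def using A_unit_exists[OF assms(1)] assms(2) by (intro cSup_least) auto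

end

section \<open>The numerical radius of a sum\<close>

locale hilbert_positive_operator = positive_operator A for A :: "'a::chilbert_space \<Rightarrow> 'a"
begin

lemma A_inner_sharp:
  assumes "T \<in> B_A A"
  shows "A_inner A (T x) y = A_inner A x (A_sharp A T y)"
proof -
  obtain S where T: "bounded_clinear T"
    and adjoint: "\<And>x y. A_inner A (T x) y = A_inner A x (S y)"
    using assms unfolding B_A_def by blast
  have "adj T (A y) = A (S y)"
  proof (rule cinner_ext_right)
    fix z
    have "cinner z (adj T (A y)) = A_inner A (T z) y"
      by (simp add: A_inner_def positive_op_selfadjoint[OF positive] flip: cinner_adj[OF T])
    also have "\<dots> = A_inner A z (S y)"
      by (rule adjoint)
    also have "\<dots> = cinner z (A (S y))"
      by (simp add: A_inner_def positive_op_selfadjoint[OF positive])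
    finally show "cinner z (adj T (A y)) = cinner z (A (S y))" .
  qed
  then have "A (A_sharp A T y) = A (S y)"
    by (simp add: A_sharp_def mp_inv_apply_range[OF bounded_clinear_A])
  then have "A_inner A x (A_sharp A T y) = A_inner A x (S y)"
    by (simp add: A_inner_def positive_op_selfadjoint[OF positive])
  then show ?thesis
    by (simp add: adjoint)
qed

lemma A_bounded_sharp:
  assumes "T \<in> B_A A"
  shows "A_bounded A (A_sharp A T)"
proof -
  obtain C where "C \<ge> 0" and C: "\<And>x. A_seminorm A (T x) \<le> C * A_seminorm A x"
    using B_A_imp_A_bounded[OF assms] unfolding A_bounded_def by blast
  have "A_seminorm A (A_sharp A T y) \<le> C * A_seminorm A y" for y
  proof (cases "A_seminorm A (A_sharp A T y) = 0")
    case True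
    then show ?thesis
      using \<open>C \<ge> 0\<close> A.seminorm_nonneg[of y] by simp
  next
    case False
    have "A_seminorm A (A_sharp A T y) * A_seminorm A (A_sharp A T y) =
        Re (A_inner A (T (A_sharp A T y)) y)"
      by (simp add: A_inner_sharp[OF assms] flip: A.power2_seminorm power2_eq_square)
    also have "\<dots> \<le> A_seminorm A (T (A_sharp A T y)) * A_seminorm A y"
      by (rule A.Re_le_seminorm_mult)
    also have "\<dots> \<le> A_seminorm A (A_sharp A T y) * (C * A_seminorm A y)"
      using mult_right_mono[OF C[of "A_sharp A T y"] A.seminorm_nonneg[of y]] by (simp add: ac_simps)
    finally show ?thesis
      using False A.seminorm_nonneg[of "A_sharp A T y"] by (simp add: mult_le_cancel_left)
  qed
  then show ?thesis
    unfolding A_bounded_def using \<open>C \<ge> 0\<close> by blast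
qed

lemma A_seminorm_power2_le_opnorm:
  assumes T: "T \<in> B_A A" and S: "S \<in> B_A A" and unit: "A_seminorm A x = 1"
  shows "(A_seminorm A (T x))\<^sup>2 + (A_seminorm A (A_sharp A S x))\<^sup>2
    \<le> A_opnorm A (\<lambda>x. A_sharp A T (T x) + S (A_sharp A S x))"
proof -
  let ?P = "\<lambda>x. A_sharp A T (T x) + S (A_sharp A S x)"
  have "A_bounded A (\<lambda>x. (A_sharp A T \<circ> T) x + (S \<circ> A_sharp A S) x)"
    using T S by (intro A_bounded_add A_bounded_compose A_bounded_sharp B_A_imp_A_bounded)
  then have "A_bounded A ?P"
    by simp
  have "(A_seminorm A (T x))\<^sup>2 = Re (A_inner A x (A_sharp A T (T x)))"
    by (simp add: A.power2_seminorm A_inner_sharp[OF T])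
  moreover have "(A_seminorm A (A_sharp A S x))\<^sup>2 = Re (A_inner A x (S (A_sharp A S x)))"
    using A.cnj_commute[of x "S (A_sharp A S x)"]
    by (simp add: A.power2_seminorm flip: A_inner_sharp[OF S])
  ultimately have "(A_seminorm A (T x))\<^sup>2 + (A_seminorm A (A_sharp A S x))\<^sup>2 =
      Re (A_inner A x (?P x))"
    by (simp add: A.add_right)
  also have "\<dots> \<le> A_seminorm A (?P x)"
    using A.Re_le_seminorm_mult[of x "?P x"] unit by simp
  also have "\<dots> \<le> A_opnorm A ?P"
    by (rule A_opnorm_ge[OF \<open>A_bounded A ?P\<close> unit])
  finally show ?thesis .
qed

lemma cmod_A_inner_add_le:
  assumes T: "T \<in> B_A A" and S: "S \<in> B_A A" and unit: "A_seminorm A x = 1"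
  shows "cmod (A_inner A (T x + S x) x) \<le>
    sqrt ((A_numrad A T)\<^sup>2 + (A_numrad A S)\<^sup>2
          + 1/2 * A_opnorm A (\<lambda>x. A_sharp A T (T x) + S (A_sharp A S x))
          + A_numrad A (S \<circ> T))"
proof (rule real_le_rsqrt)
  define t s where "t = A_inner A (T x) x" and "s = A_inner A (S x) x"
  have "cmod t \<le> A_numrad A T" and "cmod s \<le> A_numrad A S"
    unfolding t_def s_def using T S by (simp_all add: A_numrad_ge[OF B_A_imp_A_bounded unit])
  have "cmod (A_inner A (T x) (A_sharp A S x)) \<le> A_numrad A (S \<circ> T)"
    using A_numrad_ge[OF A_bounded_compose[OF B_A_imp_A_bounded[OF S] B_A_imp_A_bounded[OF T]] unit]
    by (simp add: A_inner_sharp[OF S])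
  \<comment> \<open>Buzano's inequality, with \<open>s = \<langle>x, S\<^sup>\<sharp> x\<rangle>\<^sub>A\<close> and \<open>\<langle>T x, S\<^sup>\<sharp> x\<rangle>\<^sub>A = \<langle>S T x, x\<rangle>\<^sub>A\<close>\<close>
  then have "2 * (cmod t * cmod s) \<le>
      A_seminorm A (T x) * A_seminorm A (A_sharp A S x) + A_numrad A (S \<circ> T)"
    using A.buzano[OF unit, of "T x" "A_sharp A S x"]
    by (simp add: t_def s_def A_inner_sharp[OF S] norm_mult)
  moreover have "2 * (A_seminorm A (T x) * A_seminorm A (A_sharp A S x)) \<le>
      A_opnorm A (\<lambda>x. A_sharp A T (T x) + S (A_sharp A S x))"
    using A_seminorm_power2_le_opnorm[OF T S unit]
      sum_squares_bound[of "A_seminorm A (T x)" "A_seminorm A (A_sharp A S x)"]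
    by simp
  moreover have "(cmod t)\<^sup>2 \<le> (A_numrad A T)\<^sup>2" and "(cmod s)\<^sup>2 \<le> (A_numrad A S)\<^sup>2"
    using \<open>cmod t \<le> A_numrad A T\<close> \<open>cmod s \<le> A_numrad A S\<close> by (simp_all add: power_mono)
  moreover have "(cmod (A_inner A (T x + S x) x))\<^sup>2 \<le> (cmod t + cmod s)\<^sup>2"
    unfolding t_def s_def A.add_left by (simp add: power_mono norm_triangle_ineq)
  ultimately show "(cmod (A_inner A (T x + S x) x))\<^sup>2 \<le>
      (A_numrad A T)\<^sup>2 + (A_numrad A S)\<^sup>2
        + 1/2 * A_opnorm A (\<lambda>x. A_sharp A T (T x) + S (A_sharp A S x))
        + A_numrad A (S \<circ> T)"
    by (simp add: power2_sum)
qed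

end

theorem theorem3p6:
  fixes A T S :: "'a::chilbert_space \<Rightarrow> 'a"
  assumes "positive_op A" and "A \<noteq> (\<lambda>x. 0)"
    and "T \<in> B_A A" and "S \<in> B_A A"
  shows "A_numrad A (\<lambda>x. T x + S x) \<le>
    sqrt ((A_numrad A T)\<^sup>2 + (A_numrad A S)\<^sup>2
          + 1/2 * A_opnorm A (\<lambda>x. A_sharp A T (T x) + S (A_sharp A S x))
          + A_numrad A (S \<circ> T))"
proof -
  interpret hilbert_positive_operator A
    by unfold_locales (rule assms(1))
  show ?thesis
    using assms(2) by (rule A_numrad_le) (rule cmod_A_inner_add_le[OF assms(3,4)])
qed

end
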